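(* Consider the production planning setting described in the context, in the non-overlapping case, with the discrete budgeted scenario set $\mathcal{U}^d$ (budget $\Gamma^d\in\{0,1,\dots,T\}$). Fix a production plan $\pmb{x}\in\mathbb{X}$ with cumulative productions $X_t=\sum_{i\in[t]}x_i$. Then the optimal value of the adversarial problem $\max_{\pmb{D}\in\mathcal{U}^d}\sum_{t\in[T]}\max\{f_I(X_t,D_t),f_B(X_t,D_t)\}$ equals the optimal value of $$\max\ \sum_{t\in[T]}\max\{f_I(X_t,\widehat{D}_t-\delta_t\Delta_t),\,f_B(X_t,\widehat{D}_t+\delta_t\Delta_t)\}\quad\text{s.t.}\quad \sum_{t\in[T]}\delta_t\le\Gamma^d,\ \ 0\le\delta_t\le 1\ (t\in[T]).$$ Moreover, this latter problem has an integral optimal solution $\pmb{\delta}^*\in\{0,1\}^T$ with $\sum_{t\in[T]}\delta^*_t=\Gamma^d$.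
   Context: There are $T\ge 1$ periods, $[T]=\{1,\dots,T\}$. Given are a production cost $c^P$, an inventory cost $c^I$, a backordering cost $c^B$ and a selling price $b^P$ (independent of the period), and a set $\mathbb{X}\subseteq\mathbb{R}^T_+$ of feasible production plans $\pmb{x}=(x_1,\dots,x_T)$ described by finitely many linear constraints. For a plan write $X_t=\sum_{i\in[t]}x_i$. For $t\in[T-1]$ let $f_I(X_t,D_t)=c^I(X_t-D_t)$ and $f_B(X_t,D_t)=c^B(D_t-X_t)$; for $t=T$ let $f_I(X_T,D_T)=c^I(X_T-D_T)+c^PX_T-b^PD_T$ and $f_B(X_T,D_T)=c^B(D_T-X_T)+c^PX_T-b^PX_T$. Nominal cumulative demands $\widehat{D}_t\ge 0$ satisfy $\widehat{D}_t\le\widehat{D}_{t+1}$, and deviations satisfy $0\le\Delta_t\le\widehat{D}_t$. The discrete budgeted scenario set is $\mathcal{U}^d=\{\pmb{D}\in\mathbb{R}^T: D_t\le D_{t+1}\ (t\in[T-1]),\ D_t\in[\widehat{D}_t-\Delta_t,\widehat{D}_t+\Delta_t]\ (t\in[T]),\ |\{t: D_t\ne\widehat{D}_t\}|\le\Gamma^d\}$ with integer $\Gamma^d\in\{0,\dots,T\}$. The non-overlapping case means $\widehat{D}_t+\Delta_t\le\widehat{D}_{t+1}-\Delta_{t+1}$ for all $t\in[T-1]$. *)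

theory Defs
  imports Complex_Main
begin

text \<open>Vectors indexed by periods 1..T are functions nat => real; values outside 1..T are irrelevant.\<close>

definition cumul :: "(nat \<Rightarrow> real) \<Rightarrow> nat \<Rightarrow> real" where
  "cumul x t = (\<Sum>i=1..t. x i)"

definition fI :: "nat \<Rightarrow> real \<Rightarrow> real \<Rightarrow> real \<Rightarrow> nat \<Rightarrow> real \<Rightarrow> real \<Rightarrow> real" where
  "fI T cP cI bP t X D =
     (if t < T then cI * (X - D) else cI * (X - D) + cP * X - bP * D)"

definition fB :: "nat \<Rightarrow> real \<Rightarrow> real \<Rightarrow> real \<Rightarrow> nat \<Rightarrow> real \<Rightarrow> real \<Rightarrow> real" where
  "fB T cP cB bP t X D =
     (if t < T then cB * (D - X) else cB * (D - X) + cP * X - bP * X)"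

definition Ud :: "nat \<Rightarrow> (nat \<Rightarrow> real) \<Rightarrow> (nat \<Rightarrow> real) \<Rightarrow> nat \<Rightarrow> (nat \<Rightarrow> real) set" where
  "Ud T Dhat Delta Gamma =
     {D. (\<forall>t\<in>{1..<T}. D t \<le> D (t+1)) \<and>
         (\<forall>t\<in>{1..T}. Dhat t - Delta t \<le> D t \<and> D t \<le> Dhat t + Delta t) \<and>
         card {t\<in>{1..T}. D t \<noteq> Dhat t} \<le> Gamma}"

definition DeltaSet :: "nat \<Rightarrow> nat \<Rightarrow> (nat \<Rightarrow> real) set" where
  "DeltaSet T Gamma =
     {\<delta>. (\<Sum>t=1..T. \<delta> t) \<le> real Gamma \<and> (\<forall>t\<in>{1..T}. 0 \<le> \<delta> t \<and> \<delta> t \<le> 1)}"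

definition is_opt_value :: "'a set \<Rightarrow> ('a \<Rightarrow> real) \<Rightarrow> real \<Rightarrow> bool" where
  "is_opt_value S f v \<longleftrightarrow> (\<exists>s\<in>S. f s = v) \<and> (\<forall>s\<in>S. f s \<le> v)"

end

theory Submission
  imports Defs
begin

text \<open>Since \<open>f\<^sub>I\<close> decreases and \<open>f\<^sub>B\<close> increases in the demand, the cost of a period is largest at
  an end point of \<open>[Dhat t - Delta t, Dhat t + Delta t]\<close>. Hence a scenario deviating in the periods \<open>N\<close>
  costs at most the relaxed objective at the indicator of \<open>N\<close>; conversely, by non-overlap, every
  0/1 vector \<open>\<delta>\<close> is realised by the monotone scenario taking the worse end point wherever
  \<open>\<delta>\<^sub>t = 1\<close>. Each summand of the relaxed objective is a maximum of two affine functions of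
  \<open>\<delta>\<^sub>t\<close>, so it lies below its chord over \<open>[0, 1]\<close>. The sum of chords is linear in \<open>\<delta>\<close> with
  nonnegative slopes; as a fractional knapsack it is maximised by the indicator of the \<open>\<Gamma>\<close>
  steepest periods, where chords and summands agree.\<close>

lemma fI_antimono:
  assumes "cI \<ge> 0" "bP \<ge> 0" "D \<le> D'"
  shows "fI T cP cI bP t X D' \<le> fI T cP cI bP t X D"
proof -
  have "cI * (X - D') \<le> cI * (X - D)" "bP * D \<le> bP * D'"
    using assms by (auto intro!: mult_left_mono)
  then show ?thesis unfolding fI_def by auto
qed

lemma fB_mono:
  assumes "cB \<ge> 0" "D \<le> D'"
  shows "fB T cP cB bP t X D \<le> fB T cP cB bP t X D'"
  using assms unfolding fB_def by (auto intro!: add_mono mult_left_mono)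

lemma fI_affine:
  "fI T cP cI bP t X (H - d * E) = (1 - d) * fI T cP cI bP t X H + d * fI T cP cI bP t X (H - E)"
  unfolding fI_def by (simp add: algebra_simps)

lemma fB_affine:
  "fB T cP cB bP t X (H + d * E) = (1 - d) * fB T cP cB bP t X H + d * fB T cP cB bP t X (H + E)"
  unfolding fB_def by (simp add: algebra_simps)

lemma max_convex_combination_le:
  fixes u0 u1 w0 w1 d :: real
  assumes "0 \<le> d" "d \<le> 1"
  shows "max ((1 - d) * u0 + d * u1) ((1 - d) * w0 + d * w1) \<le> (1 - d) * max u0 w0 + d * max u1 w1"
  using assms by (auto intro!: add_mono mult_left_mono)

lemma obtain_heaviest_subset_with_card:
  fixes a :: "'a \<Rightarrow> real"
  assumes "finite I" "k \<le> card I"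
  obtains S where "S \<subseteq> I" "card S = k" "\<And>s u. s \<in> S \<Longrightarrow> u \<in> I - S \<Longrightarrow> a u \<le> a s"
proof -
  define F where "F = {S. S \<subseteq> I \<and> card S = k}"
  have "finite F"
    unfolding F_def using \<open>finite I\<close> by simp
  moreover have "F \<noteq> {}"
    using obtain_subset_with_card_n[OF \<open>k \<le> card I\<close>] unfolding F_def by blast
  then have "Max (sum a ` F) \<in> sum a ` F"
    using \<open>finite F\<close> by simp
  then obtain S where "S \<in> F" and S_Max: "sum a S = Max (sum a ` F)"
    by auto
  have S_max: "\<And>S'. S' \<in> F \<Longrightarrow> sum a S' \<le> sum a S"
    unfolding S_Max using \<open>finite F\<close> by simp
  from \<open>S \<in> F\<close> have "S \<subseteq> I" "card S = k" "finite S"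
    unfolding F_def using \<open>finite I\<close> finite_subset by auto
  moreover have "a u \<le> a s" if "s \<in> S" "u \<in> I - S" for s u
  proof -
    have "insert u (S - {s}) \<in> F"
      using that \<open>S \<subseteq> I\<close> \<open>card S = k\<close> \<open>finite S\<close> unfolding F_def
      by (auto intro!: Suc_pred simp: card_gt_0_iff)
    then have "sum a (insert u (S - {s})) \<le> sum a S"
      by (rule S_max)
    moreover have "sum a (insert u (S - {s})) = sum a S - a s + a u"
      using that \<open>finite S\<close> by (simp add: sum_diff1)
    ultimately show ?thesis
      by simp
  qed
  ultimately show thesis
    using that by blast
qed

text \<open>Weight that \<open>\<delta>\<close> puts outside \<open>S\<close> is worth at most \<open>\<theta>\<close> per unit and is bounded by the
  capacity \<open>\<Sum>t\<in>S. 1 - \<delta> t\<close> left unused inside \<open>S\<close>, which is worth at least \<open>\<theta>\<close> per unit.\<close>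

lemma sum_mult_le_sum_above_threshold:
  fixes a \<delta> :: "'a \<Rightarrow> real"
  assumes "finite I" "S \<subseteq> I" "0 \<le> \<theta>"
    and above: "\<And>s. s \<in> S \<Longrightarrow> \<theta> \<le> a s" and below: "\<And>u. u \<in> I - S \<Longrightarrow> a u \<le> \<theta>"
    and box: "\<And>t. t \<in> I \<Longrightarrow> 0 \<le> \<delta> t \<and> \<delta> t \<le> 1" and budget: "sum \<delta> I \<le> real (card S)"
  shows "(\<Sum>t\<in>I. \<delta> t * a t) \<le> sum a S"
proof -
  have "finite S"
    using \<open>finite I\<close> \<open>S \<subseteq> I\<close> finite_subset by blast
  have "(\<Sum>t\<in>I - S. \<delta> t * a t) \<le> (\<Sum>t\<in>I - S. \<delta> t * \<theta>)"
    using below box by (intro sum_mono mult_left_mono) auto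
  also have "\<dots> = \<theta> * sum \<delta> (I - S)"
    by (simp add: sum_distrib_left mult.commute)
  also have "\<dots> \<le> \<theta> * (\<Sum>t\<in>S. 1 - \<delta> t)"
    using assms(1-3) budget \<open>finite S\<close> by (intro mult_left_mono) (auto simp: sum_subtractf sum_diff)
  also have "\<dots> = (\<Sum>t\<in>S. (1 - \<delta> t) * \<theta>)"
    by (simp add: sum_distrib_left mult.commute)
  also have "\<dots> \<le> (\<Sum>t\<in>S. (1 - \<delta> t) * a t)"
    using \<open>S \<subseteq> I\<close> above box by (intro sum_mono mult_left_mono) auto
  finally have "(\<Sum>t\<in>I - S. \<delta> t * a t) \<le> (\<Sum>t\<in>S. (1 - \<delta> t) * a t)" .
  then show ?thesis
    using sum.subset_diff[OF \<open>S \<subseteq> I\<close> \<open>finite I\<close>, of "\<lambda>t. \<delta> t * a t"]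
    by (simp add: left_diff_distrib sum_subtractf)
qed

lemma fractional_knapsack:
  fixes a :: "'a \<Rightarrow> real"
  assumes "finite I" "k \<le> card I" "\<And>t. t \<in> I \<Longrightarrow> 0 \<le> a t"
  obtains S where "S \<subseteq> I" "card S = k"
    "\<And>\<delta>. \<forall>t\<in>I. 0 \<le> \<delta> t \<and> \<delta> t \<le> 1 \<Longrightarrow> sum \<delta> I \<le> real k \<Longrightarrow>
       (\<Sum>t\<in>I. \<delta> t * a t) \<le> sum a S"
proof -
  obtain S where S: "S \<subseteq> I" "card S = k"
    and heaviest: "\<And>s u. s \<in> S \<Longrightarrow> u \<in> I - S \<Longrightarrow> a u \<le> a s"
    using obtain_heaviest_subset_with_card[OF assms(1,2)] by blast
  define \<theta> where "\<theta> = Max (insert 0 (a ` (I - S)))"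
  have "0 \<le> \<theta>" "\<And>u. u \<in> I - S \<Longrightarrow> a u \<le> \<theta>"
    unfolding \<theta>_def using \<open>finite I\<close> by auto
  moreover have "\<theta> \<le> a s" if "s \<in> S" for s
    unfolding \<theta>_def using \<open>finite I\<close> that S heaviest assms(3) by auto
  ultimately show thesis
    using that[OF S] sum_mult_le_sum_above_threshold[OF \<open>finite I\<close> \<open>S \<subseteq> I\<close>] \<open>card S = k\<close>
    by auto
qed

lemma budgeted_convex_sum_max_at_vertex:
  fixes h :: "'a \<Rightarrow> real \<Rightarrow> real"
  assumes "finite I" "k \<le> card I"
    and convex: "\<And>t d. t \<in> I \<Longrightarrow> 0 \<le> d \<Longrightarrow> d \<le> 1 \<Longrightarrow> h t d \<le> (1 - d) * h t 0 + d * h t 1"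
    and increasing: "\<And>t. t \<in> I \<Longrightarrow> h t 0 \<le> h t 1"
  obtains S where "S \<subseteq> I" "card S = k"
    "\<And>\<delta>. \<forall>t\<in>I. 0 \<le> \<delta> t \<and> \<delta> t \<le> 1 \<Longrightarrow> sum \<delta> I \<le> real k \<Longrightarrow>
       (\<Sum>t\<in>I. h t (\<delta> t)) \<le> (\<Sum>t\<in>I. h t (of_bool (t \<in> S)))"
proof -
  define a where "a t = h t 1 - h t 0" for t
  obtain S where S: "S \<subseteq> I" "card S = k"
    and knapsack: "\<And>\<delta>. \<forall>t\<in>I. 0 \<le> \<delta> t \<and> \<delta> t \<le> 1 \<Longrightarrow> sum \<delta> I \<le> real k \<Longrightarrow>
      (\<Sum>t\<in>I. \<delta> t * a t) \<le> sum a S"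
    using fractional_knapsack[OF assms(1,2), of a] increasing unfolding a_def by auto
  have "(\<Sum>t\<in>I. h t (\<delta> t)) \<le> (\<Sum>t\<in>I. h t (of_bool (t \<in> S)))"
    if \<delta>: "\<forall>t\<in>I. 0 \<le> \<delta> t \<and> \<delta> t \<le> 1" "sum \<delta> I \<le> real k" for \<delta>
  proof -
    have "(\<Sum>t\<in>I. h t (\<delta> t)) \<le> (\<Sum>t\<in>I. h t 0 + \<delta> t * a t)"
      using \<delta>(1) convex by (intro sum_mono) (auto simp: a_def algebra_simps)
    also have "\<dots> \<le> (\<Sum>t\<in>I. h t 0) + sum a S"
      using knapsack[OF \<delta>] by (simp add: sum.distrib)
    also have "\<dots> = (\<Sum>t\<in>I. h t 0 + of_bool (t \<in> S) * a t)"
      using S \<open>finite I\<close> by (simp add: sum.distrib Int_absorb1)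
    also have "\<dots> = (\<Sum>t\<in>I. h t (of_bool (t \<in> S)))"
      by (intro sum.cong) (auto simp: a_def)
    finally show ?thesis .
  qed
  then show thesis
    using that[OF S] by blast
qed

lemma of_bool_mem_in_DeltaSet:
  assumes "S \<subseteq> {1..T}" "card S \<le> Gamma"
  shows "(\<lambda>t. of_bool (t \<in> S)) \<in> DeltaSet T Gamma"
  using assms by (simp add: DeltaSet_def Int_absorb1)

locale robust_inventory =
  fixes T :: nat and cP cI cB bP :: real and X Dhat Delta :: "nat \<Rightarrow> real"
  assumes cI_nonneg: "0 \<le> cI" and cB_nonneg: "0 \<le> cB" and bP_nonneg: "0 \<le> bP"
    and Delta_nonneg: "\<And>t. t \<in> {1..T} \<Longrightarrow> 0 \<le> Delta t"
    and nonoverlap: "\<And>t. t \<in> {1..<T} \<Longrightarrow> Dhat t + Delta t \<le> Dhat (t + 1) - Delta (t + 1)"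
begin

definition cost :: "nat \<Rightarrow> real \<Rightarrow> real" where
  "cost t D = max (fI T cP cI bP t (X t) D) (fB T cP cB bP t (X t) D)"

definition relaxed_cost :: "nat \<Rightarrow> real \<Rightarrow> real" where
  "relaxed_cost t d =
     max (fI T cP cI bP t (X t) (Dhat t - d * Delta t))
         (fB T cP cB bP t (X t) (Dhat t + d * Delta t))"

definition worst_demand :: "nat set \<Rightarrow> nat \<Rightarrow> real" where
  "worst_demand S t =
     (if t \<notin> S then Dhat t
      else if fB T cP cB bP t (X t) (Dhat t + Delta t) \<le> fI T cP cI bP t (X t) (Dhat t - Delta t)
      then Dhat t - Delta t else Dhat t + Delta t)"

lemma relaxed_cost_convex:
  assumes "0 \<le> d" "d \<le> 1"
  shows "relaxed_cost t d \<le> (1 - d) * relaxed_cost t 0 + d * relaxed_cost t 1"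
  using max_convex_combination_le[OF assms] by (simp add: relaxed_cost_def fI_affine fB_affine)

lemma relaxed_cost_0_le_1:
  assumes "t \<in> {1..T}"
  shows "relaxed_cost t 0 \<le> relaxed_cost t 1"
proof -
  have "fI T cP cI bP t (X t) (Dhat t) \<le> fI T cP cI bP t (X t) (Dhat t - Delta t)"
    "fB T cP cB bP t (X t) (Dhat t) \<le> fB T cP cB bP t (X t) (Dhat t + Delta t)"
    using Delta_nonneg[OF assms] cI_nonneg cB_nonneg bP_nonneg
    by (auto intro: fI_antimono fB_mono)
  then show ?thesis
    unfolding relaxed_cost_def by auto
qed

lemma cost_le_relaxed_cost_1:
  assumes "Dhat t - Delta t \<le> D" "D \<le> Dhat t + Delta t"
  shows "cost t D \<le> relaxed_cost t 1"
proof -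
  have "fI T cP cI bP t (X t) D \<le> fI T cP cI bP t (X t) (Dhat t - Delta t)"
    "fB T cP cB bP t (X t) D \<le> fB T cP cB bP t (X t) (Dhat t + Delta t)"
    using assms cI_nonneg cB_nonneg bP_nonneg by (auto intro: fI_antimono fB_mono)
  then show ?thesis
    unfolding cost_def relaxed_cost_def by auto
qed

lemma cost_worst_demand:
  assumes "t \<in> {1..T}"
  shows "cost t (worst_demand S t) = relaxed_cost t (of_bool (t \<in> S))"
proof (cases "t \<in> S")
  case True
  have "fI T cP cI bP t (X t) (Dhat t + Delta t) \<le> fI T cP cI bP t (X t) (Dhat t - Delta t)"
    "fB T cP cB bP t (X t) (Dhat t - Delta t) \<le> fB T cP cB bP t (X t) (Dhat t + Delta t)"
    using Delta_nonneg[OF assms] cI_nonneg cB_nonneg bP_nonneg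
    by (auto intro: fI_antimono fB_mono)
  then show ?thesis
    using True unfolding cost_def relaxed_cost_def worst_demand_def by auto
qed (simp add: cost_def relaxed_cost_def worst_demand_def)

lemma worst_demand_in_Ud:
  assumes "S \<subseteq> {1..T}" "card S \<le> Gamma"
  shows "worst_demand S \<in> Ud T Dhat Delta Gamma"
proof -
  have bounds: "Dhat t - Delta t \<le> worst_demand S t \<and> worst_demand S t \<le> Dhat t + Delta t"
    if "t \<in> {1..T}" for t
    using Delta_nonneg[OF that] unfolding worst_demand_def by auto
  have "worst_demand S t \<le> worst_demand S (t + 1)" if "t \<in> {1..<T}" for t
    using bounds[of t] bounds[of "t + 1"] nonoverlap[OF that] that by auto
  moreover have "card {t \<in> {1..T}. worst_demand S t \<noteq> Dhat t} \<le> card S"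
    using assms(1) by (intro card_mono) (auto simp: worst_demand_def intro: finite_subset)
  ultimately show ?thesis
    unfolding Ud_def using bounds assms(2) by auto
qed

lemma scenario_cost_le_relaxed_cost:
  assumes "D \<in> Ud T Dhat Delta Gamma"
  shows "\<exists>\<delta>\<in>DeltaSet T Gamma. (\<Sum>t=1..T. cost t (D t)) \<le> (\<Sum>t=1..T. relaxed_cost t (\<delta> t))"
proof
  define N where "N = {t \<in> {1..T}. D t \<noteq> Dhat t}"
  show "(\<lambda>t. of_bool (t \<in> N)) \<in> DeltaSet T Gamma"
    using assms unfolding Ud_def N_def by (intro of_bool_mem_in_DeltaSet) auto
  show "(\<Sum>t=1..T. cost t (D t)) \<le> (\<Sum>t=1..T. relaxed_cost t (of_bool (t \<in> N)))"
  proof (intro sum_mono)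
    fix t assume "t \<in> {1..T}"
    then show "cost t (D t) \<le> relaxed_cost t (of_bool (t \<in> N))"
      using assms cost_le_relaxed_cost_1[of t "D t"]
      by (cases "t \<in> N") (auto simp: N_def Ud_def cost_def relaxed_cost_def)
  qed
qed

theorem robust_value_eq_relaxed_value:
  assumes "Gamma \<le> T"
  shows "\<exists>v. is_opt_value (Ud T Dhat Delta Gamma) (\<lambda>D. \<Sum>t=1..T. cost t (D t)) v
    \<and> is_opt_value (DeltaSet T Gamma) (\<lambda>\<delta>. \<Sum>t=1..T. relaxed_cost t (\<delta> t)) v
    \<and> (\<exists>\<delta>\<in>DeltaSet T Gamma. (\<forall>t\<in>{1..T}. \<delta> t \<in> {0, 1})
         \<and> (\<Sum>t=1..T. \<delta> t) = real Gamma \<and> (\<Sum>t=1..T. relaxed_cost t (\<delta> t)) = v)"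
proof -
  obtain S where S: "S \<subseteq> {1..T}" "card S = Gamma"
    and S_opt: "\<And>\<delta>. \<forall>t\<in>{1..T}. 0 \<le> \<delta> t \<and> \<delta> t \<le> 1 \<Longrightarrow> sum \<delta> {1..T} \<le> real Gamma \<Longrightarrow>
      (\<Sum>t=1..T. relaxed_cost t (\<delta> t)) \<le> (\<Sum>t=1..T. relaxed_cost t (of_bool (t \<in> S)))"
    using budgeted_convex_sum_max_at_vertex[of "{1..T}" Gamma relaxed_cost]
      assms relaxed_cost_convex relaxed_cost_0_le_1 by auto
  define v where "v = (\<Sum>t=1..T. relaxed_cost t (of_bool (t \<in> S)))"
  have vertex_in: "(\<lambda>t. of_bool (t \<in> S)) \<in> DeltaSet T Gamma"
    using S by (intro of_bool_mem_in_DeltaSet) auto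
  have relaxed_le: "(\<Sum>t=1..T. relaxed_cost t (\<delta> t)) \<le> v" if "\<delta> \<in> DeltaSet T Gamma" for \<delta>
    using S_opt that unfolding v_def DeltaSet_def by auto
  have worst_value: "(\<Sum>t=1..T. cost t (worst_demand S t)) = v"
    unfolding v_def by (intro sum.cong) (simp_all add: cost_worst_demand)
  have "worst_demand S \<in> Ud T Dhat Delta Gamma"
    using S by (intro worst_demand_in_Ud) auto
  moreover have "(\<Sum>t=1..T. cost t (D t)) \<le> v" if "D \<in> Ud T Dhat Delta Gamma" for D
    using scenario_cost_le_relaxed_cost[OF that] relaxed_le by force
  ultimately have "is_opt_value (Ud T Dhat Delta Gamma) (\<lambda>D. \<Sum>t=1..T. cost t (D t)) v"
    unfolding is_opt_value_def using worst_value by blast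
  moreover have "is_opt_value (DeltaSet T Gamma) (\<lambda>\<delta>. \<Sum>t=1..T. relaxed_cost t (\<delta> t)) v"
    unfolding is_opt_value_def v_def using relaxed_le[unfolded v_def]
    by (intro conjI bexI[OF _ vertex_in] ballI) simp_all
  moreover have "(\<Sum>t=1..T. of_bool (t \<in> S)) = real Gamma"
    using S by (simp add: Int_absorb1)
  ultimately show ?thesis
    using vertex_in
    by (intro exI[of _ v] conjI bexI[of _ "\<lambda>t. of_bool (t \<in> S)"]) (auto simp: v_def)
qed

end

theorem lemma1:
  fixes T :: nat and Gamma :: nat and m :: nat
    and cP cI cB bP :: real
    and A :: "nat \<Rightarrow> nat \<Rightarrow> real" and b :: "nat \<Rightarrow> real"
    and Dhat Delta x :: "nat \<Rightarrow> real"
  assumes T_pos: "T \<ge> 1"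
    and Gamma_le: "Gamma \<le> T"
    and costs: "cP \<ge> 0" "cI \<ge> 0" "cB \<ge> 0" "bP \<ge> 0"
    and Dhat_nonneg: "\<forall>t\<in>{1..T}. Dhat t \<ge> 0"
    and Dhat_mono: "\<forall>t\<in>{1..<T}. Dhat t \<le> Dhat (t+1)"
    and Delta_bounds: "\<forall>t\<in>{1..T}. 0 \<le> Delta t \<and> Delta t \<le> Dhat t"
    and nonoverlap: "\<forall>t\<in>{1..<T}. Dhat t + Delta t \<le> Dhat (t+1) - Delta (t+1)"
    and x_in_X: "x \<in> {y. (\<forall>t\<in>{1..T}. y t \<ge> 0) \<and>
                          (\<forall>j<m. (\<Sum>t=1..T. A j t * y t) \<le> b j)}"
  shows "\<exists>v.
     is_opt_value (Ud T Dhat Delta Gamma)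
       (\<lambda>D. \<Sum>t=1..T. max (fI T cP cI bP t (cumul x t) (D t))
                           (fB T cP cB bP t (cumul x t) (D t))) v
   \<and> is_opt_value (DeltaSet T Gamma)
       (\<lambda>\<delta>. \<Sum>t=1..T. max (fI T cP cI bP t (cumul x t) (Dhat t - \<delta> t * Delta t))
                           (fB T cP cB bP t (cumul x t) (Dhat t + \<delta> t * Delta t))) v
   \<and> (\<exists>\<delta>\<in>DeltaSet T Gamma. (\<forall>t\<in>{1..T}. \<delta> t \<in> {0, 1}) \<and>
         (\<Sum>t=1..T. \<delta> t) = real Gamma \<and>
         (\<Sum>t=1..T. max (fI T cP cI bP t (cumul x t) (Dhat t - \<delta> t * Delta t))
                       (fB T cP cB bP t (cumul x t) (Dhat t + \<delta> t * Delta t))) = v)"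
proof -
  interpret robust_inventory T cP cI cB bP "cumul x" Dhat Delta
    using costs Delta_bounds nonoverlap by unfold_locales auto
  show ?thesis
    using robust_value_eq_relaxed_value[OF Gamma_le] by (simp add: cost_def relaxed_cost_def)
qed

end
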